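(* Let $M=(X,rk)$ be a matroid on a finite ground set $X$ with rank $r=rk(X)$, and let $j$ be a nonnegative integer. Then $f_1(M)<j+r$ if and only if \[[y^j]T_M(1,y)=\binom{|X|-j-1}{r-1}.\]
   Context: $T_M(x,y)=\sum_{A\subseteq X}(x-1)^{r-rk(A)}(y-1)^{|A|-rk(A)}$ is the Tutte polynomial of $M$, and $[y^j]f(y)$ denotes the coefficient of $y^j$. A flat of $M$ is a set $F\subseteq X$ with $F=\{e\in X: rk(F\cup\{e\})=rk(F)\}$; a hyperplane is a flat of rank $r-1$. $f_1(M)$ is the maximum size of a hyperplane of $M$, i.e. $f_1(M)=\max\{|F|: F\text{ a flat},\ rk(F)=r-1\}$. *)

theory Defs
  imports "HOL-Computational_Algebra.Polynomial"
begin

definition matroid :: "'a set \<Rightarrow> ('a set \<Rightarrow> nat) \<Rightarrow> bool" where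
  "matroid X rk \<longleftrightarrow> finite X \<and>
     (\<forall>A. A \<subseteq> X \<longrightarrow> rk A \<le> card A) \<and>
     (\<forall>A B. A \<subseteq> B \<and> B \<subseteq> X \<longrightarrow> rk A \<le> rk B) \<and>
     (\<forall>A B. A \<subseteq> X \<and> B \<subseteq> X \<longrightarrow> rk (A \<union> B) + rk (A \<inter> B) \<le> rk A + rk B)"

definition flat :: "'a set \<Rightarrow> ('a set \<Rightarrow> nat) \<Rightarrow> 'a set \<Rightarrow> bool" where
  "flat X rk F \<longleftrightarrow> F \<subseteq> X \<and> F = {e \<in> X. rk (F \<union> {e}) = rk F}"

definition f1 :: "'a set \<Rightarrow> ('a set \<Rightarrow> nat) \<Rightarrow> nat" where
  "f1 X rk = Max {card F | F. flat X rk F \<and> rk F = rk X - 1}"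

text \<open>The Tutte polynomial T_M(x,y) with x specialised to the integer x0,
  as a polynomial in y:
  sum over A of (x0-1)^(r - rk A) (y-1)^(|A| - rk A).  (Note 0^0 = 1.)\<close>
definition tutte_at_x :: "'a set \<Rightarrow> ('a set \<Rightarrow> nat) \<Rightarrow> int \<Rightarrow> int poly" where
  "tutte_at_x X rk x0 =
     (\<Sum>A\<in>Pow X. smult ((x0 - 1) ^ (rk X - rk A)) ([:-1, 1:] ^ (card A - rk A)))"

end

theory Submission
  imports Defs
begin

text \<open>Write r = rk X. Since 0^0 = 1 and 0^k = 0 for k > 0, only the spanning sets
  contribute to T_M(1,y), so T_M(1,y) is the sum of (y-1)^(|A|-r) over all sets A with
  |A| \<ge> r, minus the same sum over the non-spanning ones (rank < r). The first sum depends
  only on |X| and r; its coefficient of y^j is the binomial coefficient of the theorem.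
  The second sum has nonnegative coefficients by deletion and contraction, and its
  coefficient of y^j is positive exactly if some non-spanning set has at least j + r
  elements; both facts are proved with an arbitrary threshold in place of r, since
  contracting a non-loop lowers it by one. Every non-spanning set lies in a hyperplane, so the largest such set has
  f_1(M) elements.\<close>

definition low_rank_poly :: "'a set \<Rightarrow> ('a set \<Rightarrow> nat) \<Rightarrow> nat \<Rightarrow> int poly" where
  "low_rank_poly X rk r =
     (\<Sum>A\<in>Pow X. if rk A < r \<and> r \<le> card A then [:-1, 1:] ^ (card A - r) else 0)"

lemma low_rank_poly_0 [simp]: "low_rank_poly X rk 0 = 0"
  by (simp add: low_rank_poly_def)

lemma low_rank_poly_empty [simp]: "low_rank_poly {} rk r = 0"
  unfolding low_rank_poly_def Pow_empty by simp

lemma matroid_finite: "matroid X rk \<Longrightarrow> finite X"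
  by (simp add: matroid_def)

lemma matroid_rank_le_card: "matroid X rk \<Longrightarrow> A \<subseteq> X \<Longrightarrow> rk A \<le> card A"
  by (simp add: matroid_def)

lemma matroid_rank_mono: "matroid X rk \<Longrightarrow> A \<subseteq> B \<Longrightarrow> B \<subseteq> X \<Longrightarrow> rk A \<le> rk B"
  by (simp add: matroid_def)

lemma matroid_rank_submod:
  "matroid X rk \<Longrightarrow> A \<subseteq> X \<Longrightarrow> B \<subseteq> X \<Longrightarrow> rk (A \<union> B) + rk (A \<inter> B) \<le> rk A + rk B"
  by (simp add: matroid_def)

lemma matroid_rank_singleton_le: "matroid X rk \<Longrightarrow> e \<in> X \<Longrightarrow> rk {e} \<le> 1"
  using matroid_rank_le_card[of X rk "{e}"] by simp

lemma matroid_rank_insert_le: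
  assumes "matroid X rk" "B \<subseteq> X" "e \<in> X"
  shows "rk (insert e B) \<le> rk B + rk {e}"
  using matroid_rank_submod[OF assms(1,2), of "{e}"] assms(3) by simp

lemma matroid_rank_insert_loop:
  assumes "matroid X rk" "B \<subseteq> X" "e \<in> X" "rk {e} = 0"
  shows "rk (insert e B) = rk B"
proof -
  have "rk B \<le> rk (insert e B)"
    using matroid_rank_mono[OF assms(1), of B "insert e B"] assms(2,3) by auto
  then show ?thesis
    using matroid_rank_insert_le[OF assms(1-3)] assms(4) by simp
qed

lemma matroid_subset: "matroid X rk \<Longrightarrow> Y \<subseteq> X \<Longrightarrow> matroid Y rk"
  unfolding matroid_def by (meson finite_subset subset_trans)

lemma matroid_loops: "finite X \<Longrightarrow> matroid X (\<lambda>_. 0)"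
  by (simp add: matroid_def)

lemma matroid_contract:
  assumes m: "matroid (insert e X) rk" and e: "rk {e} = 1"
  shows "matroid X (\<lambda>B. rk (insert e B) - 1)"
  unfolding matroid_def
proof (intro conjI allI impI)
  show "finite X"
    using matroid_finite[OF m] by simp
next
  fix A assume "A \<subseteq> X"
  then have "A \<subseteq> insert e X" by blast
  then show "rk (insert e A) - 1 \<le> card A"
    using matroid_rank_insert_le[OF m, of A e] matroid_rank_le_card[OF m, of A] e by simp
next
  fix A B assume "A \<subseteq> B \<and> B \<subseteq> X"
  then have "rk (insert e A) \<le> rk (insert e B)"
    by (intro matroid_rank_mono[OF m]) auto
  then show "rk (insert e A) - 1 \<le> rk (insert e B) - 1"
    by simp
next
  fix A B assume AB: "A \<subseteq> X \<and> B \<subseteq> X"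
  have "insert e A \<union> insert e B = insert e (A \<union> B)" "insert e A \<inter> insert e B = insert e (A \<inter> B)"
    by auto
  then have "rk (insert e (A \<union> B)) + rk (insert e (A \<inter> B)) \<le> rk (insert e A) + rk (insert e B)"
    using matroid_rank_submod[OF m, of "insert e A" "insert e B"] AB by auto
  moreover have "1 \<le> rk (insert e C)" if "C \<subseteq> X" for C
    using matroid_rank_mono[OF m, of "{e}" "insert e C"] that e by auto
  then have "1 \<le> rk (insert e (A \<union> B))" "1 \<le> rk (insert e (A \<inter> B))"
      "1 \<le> rk (insert e A)" "1 \<le> rk (insert e B)"
    using AB by (meson le_infI1 le_supI)+
  ultimately show "rk (insert e (A \<union> B)) - 1 + (rk (insert e (A \<inter> B)) - 1)
      \<le> rk (insert e A) - 1 + (rk (insert e B) - 1)"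
    by linarith
qed

lemma sum_Pow_insert:
  assumes "finite X" "e \<notin> X"
  shows "(\<Sum>A\<in>Pow (insert e X). f A) = (\<Sum>A\<in>Pow X. f A) + (\<Sum>A\<in>Pow X. f (insert e A))"
proof -
  have "inj_on (insert e) (Pow X)"
    using assms(2) unfolding inj_on_def by (metis PowD insert_ident subsetD)
  moreover have "Pow X \<inter> insert e ` Pow X = {}"
    using assms(2) by auto
  ultimately show ?thesis
    unfolding Pow_insert using assms(1) by (simp add: sum.union_disjoint sum.reindex)
qed

lemma sum_Pow_card_eq:
  assumes "finite X"
  shows "(\<Sum>A\<in>Pow X. if card A = k then 1 else 0) = (of_nat (card X choose k) :: 'b :: semiring_1)"
proof -
  have "(\<Sum>A\<in>Pow X. if card A = k then 1 else 0) = (of_nat (card {A\<in>Pow X. card A = k}) :: 'b)"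
    using assms by (simp add: sum.If_cases Int_def)
  also have "{A\<in>Pow X. card A = k} = {A. A \<subseteq> X \<and> card A = k}"
    by auto
  finally show ?thesis
    using n_subsets[OF assms] by simp
qed

lemma low_rank_poly_insert_loop:
  assumes m: "matroid (insert e X) rk" and e: "e \<notin> X" "rk {e} = 0" and r: "1 \<le> r"
  shows "low_rank_poly (insert e X) rk r
    = pCons 0 (low_rank_poly X rk r) + [:int (card X choose (r - 1)):]"
proof -
  let ?t = "\<lambda>A. if rk A < r \<and> r \<le> card A then [:-1, 1:] ^ (card A - r) else (0 :: int poly)"
  have fin: "finite X"
    using matroid_finite[OF m] by simp
  have "?t (insert e A) = [:-1, 1:] * ?t A + (if card A = r - 1 then 1 else 0)" if "A \<subseteq> X" for A
  proof -
    have "card (insert e A) = Suc (card A)"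
      using that e(1) fin by (meson card_insert_disjoint finite_subset subsetD)
    moreover have "rk (insert e A) = rk A"
      using matroid_rank_insert_loop[OF m, of A e] that e(2) by auto
    moreover have "rk A \<le> card A"
      using matroid_rank_le_card[OF m, of A] that by auto
    ultimately show ?thesis
      using r by (cases "r \<le> card A") (auto simp: Suc_diff_le)
  qed
  then have "low_rank_poly (insert e X) rk r = low_rank_poly X rk r
      + (\<Sum>A\<in>Pow X. [:-1, 1:] * ?t A + (if card A = r - 1 then 1 else 0))"
    unfolding low_rank_poly_def sum_Pow_insert[OF fin e(1)] by simp
  also have "\<dots> = low_rank_poly X rk r + [:-1, 1:] * low_rank_poly X rk r + of_nat (card X choose (r - 1))"
    by (simp add: sum.distrib sum_distrib_left sum_Pow_card_eq[OF fin] low_rank_poly_def del: One_nat_def)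
  finally show ?thesis
    by (simp add: algebra_simps of_nat_poly)
qed

lemma low_rank_poly_insert_nonloop:
  assumes m: "matroid (insert e X) rk" and e: "e \<notin> X" "rk {e} = 1"
  shows "low_rank_poly (insert e X) rk r
    = low_rank_poly X rk r + low_rank_poly X (\<lambda>B. rk (insert e B) - 1) (r - 1)"
proof -
  have fin: "finite X"
    using matroid_finite[OF m] by simp
  have "(if rk (insert e A) < r \<and> r \<le> card (insert e A) then [:-1, 1:] ^ (card (insert e A) - r) else 0)
      = (if rk (insert e A) - 1 < r - 1 \<and> r - 1 \<le> card A then [:-1, 1:] ^ (card A - (r - 1))
         else (0 :: int poly))" if "A \<subseteq> X" for A
  proof -
    have "card (insert e A) = Suc (card A)"
      using that e(1) fin by (meson card_insert_disjoint finite_subset subsetD)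
    moreover have "1 \<le> rk (insert e A)"
      using matroid_rank_mono[OF m, of "{e}" "insert e A"] that e(2) by auto
    ultimately show ?thesis
      by (cases r) auto
  qed
  then show ?thesis
    unfolding low_rank_poly_def sum_Pow_insert[OF fin e(1)] by simp
qed

text \<open>The constant rank function 0 is that of the matroid consisting of loops only; for
  r \<ge> 1 its low-rank polynomial therefore sums over all sets of at least r elements.\<close>

lemma coeff_low_rank_poly_loops:
  assumes "finite X" "1 \<le> r"
  shows "coeff (low_rank_poly X (\<lambda>_. 0) r) j
    = (if j + 1 \<le> card X then int ((card X - j - 1) choose (r - 1)) else 0)"
  using assms(1)
proof (induction X arbitrary: j rule: finite_induct)
  case empty
  then show ?case by simp
next
  case (insert e X)
  have "low_rank_poly (insert e X) (\<lambda>_. 0) r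
      = pCons 0 (low_rank_poly X (\<lambda>_. 0) r) + [:int (card X choose (r - 1)):]"
    using low_rank_poly_insert_loop[OF matroid_loops] insert.hyps assms(2) by simp
  then show ?case
    using insert by (cases j) auto
qed

lemma coeff_low_rank_poly_nonneg:
  assumes "matroid X rk"
  shows "0 \<le> coeff (low_rank_poly X rk r) j"
  using matroid_finite[OF assms] assms
proof (induction X arbitrary: rk r j rule: finite_induct)
  case empty
  then show ?case by simp
next
  case (insert e X)
  have m: "matroid X rk"
    using matroid_subset[OF insert.prems] by blast
  consider "rk {e} = 0" | "rk {e} = 1"
    using matroid_rank_singleton_le[OF insert.prems insertI1] by linarith
  then show ?case
  proof cases
    case loop: 1
    show ?thesis
    proof (cases "r = 0")
      case False
      then have r: "1 \<le> r" by simp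
      show ?thesis
        unfolding low_rank_poly_insert_loop[OF insert.prems insert.hyps(2) loop r]
        using insert.IH[OF m] by (cases j) auto
    qed simp
  next
    case nonloop: 2
    show ?thesis
      unfolding low_rank_poly_insert_nonloop[OF insert.prems insert.hyps(2) nonloop] coeff_add
      using insert.IH[OF m] insert.IH[OF matroid_contract[OF insert.prems nonloop]] by simp
  qed
qed

lemma coeff_low_rank_poly_pos:
  assumes "matroid X rk" "A \<subseteq> X" "rk A < r" "j + r \<le> card A"
  shows "0 < coeff (low_rank_poly X rk r) j"
  using matroid_finite[OF assms(1)] assms
proof (induction X arbitrary: rk r j A rule: finite_induct)
  case empty
  then show ?case by simp
next
  case (insert e X)
  have m: "matroid X rk"
    using matroid_subset[OF insert.prems(1)] by blast
  have fin_A: "finite A"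
    using insert.hyps(1) insert.prems(2) finite_subset by blast
  have A': "A - {e} \<subseteq> X" "card A - 1 \<le> card (A - {e})"
    using insert.prems(2) fin_A by (auto simp: card_Diff_singleton_if)
  consider "rk {e} = 0" | "rk {e} = 1"
    using matroid_rank_singleton_le[OF insert.prems(1) insertI1] by linarith
  then show ?case
  proof cases
    case loop: 1
    have "rk (insert e (A - {e})) = rk (A - {e})"
      using matroid_rank_insert_loop[OF insert.prems(1), of "A - {e}" e] loop insert.prems(2) by blast
    then have "rk (A - {e}) = rk A"
      by (cases "e \<in> A") (auto simp: insert_absorb)
    moreover have "r \<le> card X + 1"
      using card_mono[OF _ insert.prems(2)] insert.hyps insert.prems(4) by simp
    moreover have "1 \<le> r"
      using insert.prems(3) by simp
    ultimately show ?thesis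
      unfolding low_rank_poly_insert_loop[OF insert.prems(1) insert.hyps(2) loop \<open>1 \<le> r\<close>]
      using insert.IH[OF m A'(1)] insert.prems(3,4) A'(2)
      by (cases j) auto
  next
    case nonloop: 2
    note contraction = matroid_contract[OF insert.prems(1) nonloop]
    show ?thesis
    proof (cases "e \<in> A")
      case True
      have "rk (insert e (A - {e})) = rk A"
        using True by (simp add: insert_absorb)
      moreover have "1 \<le> rk A"
        using matroid_rank_mono[OF insert.prems(1), of "{e}" A] True insert.prems(2) nonloop by auto
      ultimately have "0 < coeff (low_rank_poly X (\<lambda>B. rk (insert e B) - 1) (r - 1)) j"
        using insert.IH[OF contraction A'(1)] insert.prems(3,4) A'(2) by simp
      then show ?thesis
        unfolding low_rank_poly_insert_nonloop[OF insert.prems(1) insert.hyps(2) nonloop] coeff_add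
        using coeff_low_rank_poly_nonneg[OF m] by (simp add: add_nonneg_pos)
    next
      case False
      then have "0 < coeff (low_rank_poly X rk r) j"
        using insert.IH[OF m _ insert.prems(3,4)] insert.prems(2) by blast
      then show ?thesis
        unfolding low_rank_poly_insert_nonloop[OF insert.prems(1) insert.hyps(2) nonloop] coeff_add
        using coeff_low_rank_poly_nonneg[OF contraction] by (simp add: add_pos_nonneg)
    qed
  qed
qed

lemma coeff_low_rank_poly_eq_0_iff:
  assumes "matroid X rk"
  shows "coeff (low_rank_poly X rk r) j = 0 \<longleftrightarrow> \<not> (\<exists>A\<subseteq>X. rk A < r \<and> j + r \<le> card A)"
proof
  assume "coeff (low_rank_poly X rk r) j = 0"
  then show "\<not> (\<exists>A\<subseteq>X. rk A < r \<and> j + r \<le> card A)"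
    using coeff_low_rank_poly_pos[OF assms] by (metis less_irrefl)
next
  assume "\<not> (\<exists>A\<subseteq>X. rk A < r \<and> j + r \<le> card A)"
  then show "coeff (low_rank_poly X rk r) j = 0"
    unfolding low_rank_poly_def coeff_sum
    by (intro sum.neutral ballI) (auto intro!: coeff_eq_0 simp: degree_linear_power)
qed

lemma tutte_at_1_eq_low_rank_poly_diff:
  assumes m: "matroid X rk" and r: "1 \<le> rk X"
  shows "tutte_at_x X rk 1 = low_rank_poly X (\<lambda>_. 0) (rk X) - low_rank_poly X rk (rk X)"
proof -
  have "tutte_at_x X rk 1 + low_rank_poly X rk (rk X) = low_rank_poly X (\<lambda>_. 0) (rk X)"
    unfolding tutte_at_x_def low_rank_poly_def sum.distrib[symmetric]
  proof (rule sum.cong[OF refl])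
    fix A assume "A \<in> Pow X"
    then have "rk A \<le> rk X" "rk A \<le> card A"
      using matroid_rank_mono[OF m, of A X] matroid_rank_le_card[OF m, of A] by auto
    then show "smult ((1 - 1 :: int) ^ (rk X - rk A)) ([:-1, 1:] ^ (card A - rk A))
        + (if rk A < rk X \<and> rk X \<le> card A then [:-1, 1:] ^ (card A - rk X) else 0)
      = (if 0 < rk X \<and> rk X \<le> card A then [:-1, 1:] ^ (card A - rk X) else 0)"
      using r by (cases "rk A = rk X") (auto simp: power_0_left)
  qed
  then show ?thesis
    by (simp add: eq_diff_eq)
qed

lemma nonspanning_subset_hyperplane:
  assumes m: "matroid X rk" and A: "A \<subseteq> X" "rk A < rk X"
  obtains F where "flat X rk F" "rk F = rk X - 1" "A \<subseteq> F"
proof -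
  let ?S = "{B. A \<subseteq> B \<and> B \<subseteq> X \<and> rk B < rk X}"
  have "finite ?S"
    using matroid_finite[OF m] by (auto intro: rev_finite_subset[of "Pow X"])
  then obtain F where F: "F \<in> ?S" and F_max: "\<And>B. B \<in> ?S \<Longrightarrow> F \<subseteq> B \<Longrightarrow> F = B"
    using finite_has_maximal2[of ?S A] A by auto
  have F_ext: "rk (insert e F) = rk X" if "e \<in> X - F" for e
  proof -
    have "insert e F \<notin> ?S"
      using F_max[of "insert e F"] that by blast
    moreover have "rk (insert e F) \<le> rk X"
      using matroid_rank_mono[OF m, of "insert e F" X] F that by blast
    ultimately show ?thesis
      using F that by auto
  qed
  have "e \<in> F" if "e \<in> X" "rk (insert e F) = rk F" for e
    using F_ext[of e] that F by (metis DiffI less_irrefl mem_Collect_eq)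
  then have "flat X rk F"
    unfolding flat_def using F by (auto simp: insert_absorb)
  moreover have "F \<noteq> X"
    using F by auto
  then obtain e where e: "e \<in> X - F"
    using F by blast
  then have "rk X \<le> rk F + 1"
    using F_ext[OF e] matroid_rank_insert_le[OF m, of F e] matroid_rank_singleton_le[OF m, of e] F
    by auto
  then have "rk F = rk X - 1"
    using F by auto
  ultimately show ?thesis
    using that F by blast
qed

lemma f1_eq_Max_nonspanning:
  assumes m: "matroid X rk" and r: "1 \<le> rk X"
  shows "f1 X rk = Max {card A | A. A \<subseteq> X \<and> rk A < rk X}"
  unfolding f1_def
proof (rule Max_eq_if)
  have "finite (card ` Pow X)"
    using matroid_finite[OF m] by simp
  then show "finite {card F | F. flat X rk F \<and> rk F = rk X - 1}"
    and "finite {card A | A. A \<subseteq> X \<and> rk A < rk X}"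
    by (auto simp: flat_def intro: rev_finite_subset)
  show "\<forall>a\<in>{card F | F. flat X rk F \<and> rk F = rk X - 1}. \<exists>b\<in>{card A | A. A \<subseteq> X \<and> rk A < rk X}. a \<le> b"
  proof clarify
    fix F assume "flat X rk F" "rk F = rk X - 1"
    then have "F \<subseteq> X \<and> rk F < rk X"
      using r by (simp add: flat_def)
    then show "\<exists>b\<in>{card A | A. A \<subseteq> X \<and> rk A < rk X}. card F \<le> b"
      by blast
  qed
  show "\<forall>b\<in>{card A | A. A \<subseteq> X \<and> rk A < rk X}. \<exists>a\<in>{card F | F. flat X rk F \<and> rk F = rk X - 1}. b \<le> a"
  proof clarify
    fix A assume A: "A \<subseteq> X" "rk A < rk X"
    then obtain F where F: "flat X rk F" "rk F = rk X - 1" "A \<subseteq> F"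
      using nonspanning_subset_hyperplane[OF m] by blast
    then have "card A \<le> card F"
      using matroid_finite[OF m] by (intro card_mono) (auto simp: flat_def intro: finite_subset)
    then show "\<exists>a\<in>{card F | F. flat X rk F \<and> rk F = rk X - 1}. card A \<le> a"
      using F by blast
  qed
qed

lemma f1_less_iff:
  assumes "matroid X rk" "1 \<le> rk X"
  shows "f1 X rk < k \<longleftrightarrow> (\<forall>A\<subseteq>X. rk A < rk X \<longrightarrow> card A < k)"
proof -
  let ?N = "{card A | A. A \<subseteq> X \<and> rk A < rk X}"
  have "finite ?N"
    using matroid_finite[OF assms(1)] by (auto intro: rev_finite_subset[of "card ` Pow X"])
  moreover have "{} \<subseteq> X \<and> rk {} < rk X"
    using assms matroid_rank_le_card[OF assms(1), of "{}"] by simp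
  then have "?N \<noteq> {}"
    by blast
  ultimately show ?thesis
    unfolding f1_eq_Max_nonspanning[OF assms] by (subst Max_less_iff) blast+
qed

theorem theorem3p3:
  fixes X :: "'a set" and rk :: "'a set \<Rightarrow> nat" and j :: nat
  assumes "matroid X rk" and "rk X \<ge> 1"
  shows "f1 X rk < j + rk X \<longleftrightarrow>
         coeff (tutte_at_x X rk 1) j =
           (if j + 1 \<le> card X then int ((card X - j - 1) choose (rk X - 1)) else 0)"
proof -
  have "f1 X rk < j + rk X \<longleftrightarrow> \<not> (\<exists>A\<subseteq>X. rk A < rk X \<and> j + rk X \<le> card A)"
    using f1_less_iff[OF assms] by (simp add: not_le) blast
  also have "\<dots> \<longleftrightarrow> coeff (low_rank_poly X rk (rk X)) j = 0"
    using coeff_low_rank_poly_eq_0_iff[OF assms(1)] by simp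
  also have "\<dots> \<longleftrightarrow> coeff (tutte_at_x X rk 1) j =
      (if j + 1 \<le> card X then int ((card X - j - 1) choose (rk X - 1)) else 0)"
    unfolding tutte_at_1_eq_low_rank_poly_diff[OF assms] coeff_diff
      coeff_low_rank_poly_loops[OF matroid_finite[OF assms(1)] assms(2)]
    by auto
  finally show ?thesis .
qed

end
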